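(* Let $V$ be of class $\mathcal{C}^1$ and let $z$ be a saddle of $V$. Then $\nabla V(z)=0$.
   Context: $V:\mathbb{R}^d\to\mathbb{R}$ is a continuous potential, bounded below, with exponentially tight level sets. Communication height: $\overline V(x,y)=\inf_{\gamma}\sup_{t\in[0,1]}V(\gamma(t))$, the infimum over continuous paths $\gamma:[0,1]\to\mathbb{R}^d$ from $x$ to $y$. Closed valley $\mathcal{C}(x)=\{y:\overline V(y,x)=V(x)\}$, open valley $\mathcal{O}(x)=\{y\in\mathcal{C}(x):V(y)<V(x)\}$; $\mathcal{B}_\eta(x)$ is the open ball of radius $\eta$ about $x$. A point $z$ is a saddle if there is $\eta>0$ such that (i) $\mathcal{O}(z)\cap\mathcal{B}_\eta(z)$ is non-empty and not path-connected, and (ii) $(\mathcal{O}(z)\cup\{z\})\cap\mathcal{B}_\eta(z)$ is path-connected. *)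

theory Defs
  imports "HOL-Analysis.Analysis"
begin

definition comm_height :: "('a::euclidean_space \<Rightarrow> real) \<Rightarrow> 'a \<Rightarrow> 'a \<Rightarrow> real" where
  "comm_height V x y =
     (INF \<gamma>\<in>{\<gamma>. path \<gamma> \<and> pathstart \<gamma> = x \<and> pathfinish \<gamma> = y}.
        (SUP t\<in>{0..1}. V (\<gamma> t)))"

definition closed_valley :: "('a::euclidean_space \<Rightarrow> real) \<Rightarrow> 'a \<Rightarrow> 'a set" where
  "closed_valley V x = {y. comm_height V y x = V x}"

definition open_valley :: "('a::euclidean_space \<Rightarrow> real) \<Rightarrow> 'a \<Rightarrow> 'a set" where
  "open_valley V x = {y \<in> closed_valley V x. V y < V x}"

definition is_saddle :: "('a::euclidean_space \<Rightarrow> real) \<Rightarrow> 'a \<Rightarrow> bool" where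
  "is_saddle V z \<longleftrightarrow> (\<exists>\<eta>>0.
      open_valley V z \<inter> ball z \<eta> \<noteq> {} \<and>
      \<not> path_connected (open_valley V z \<inter> ball z \<eta>) \<and>
      path_connected ((open_valley V z \<union> {z}) \<inter> ball z \<eta>))"

definition gradient :: "('a::euclidean_space \<Rightarrow>\<^sub>L real) \<Rightarrow> 'a" where
  "gradient D = (\<Sum>b\<in>Basis. blinfun_apply D b *\<^sub>R b)"

end

theory Submission
  imports Defs
begin

text \<open>Suppose \<open>\<nabla>V(z) \<noteq> 0\<close>. By continuity of \<open>\<nabla>V\<close> there is a point \<open>w\<close> slightly downhill
  from \<open>z\<close> such that \<open>V\<close> is nonincreasing along every segment from a point \<open>y\<close> near \<open>z\<close>
  to \<open>w\<close>. Then \<open>y \<rightarrow> w \<rightarrow> z\<close> stays below \<open>V(z)\<close>, so for \<open>y\<close> in the open valley the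
  whole segment from \<open>y\<close> to \<open>w\<close> lies in the open valley. Any point of the valley can be
  joined to \<open>z\<close> inside the valley plus \<open>z\<close>; stopping that path on a small sphere around
  \<open>z\<close> joins it inside the valley to a point near \<open>z\<close>, hence to \<open>w\<close>. So the valley near \<open>z\<close>
  is path-connected, contradicting the saddle condition.\<close>

lemma comm_height_eq_of_path_below:
  fixes V :: "'a::euclidean_space \<Rightarrow> real"
  assumes cont: "continuous_on UNIV V"
    and \<gamma>: "path \<gamma>" "pathstart \<gamma> = y" "pathfinish \<gamma> = z"
    and below: "\<And>x. x \<in> path_image \<gamma> \<Longrightarrow> V x \<le> V z"
  shows "comm_height V y z = V z"
proof -
  let ?P = "{\<gamma>. path \<gamma> \<and> pathstart \<gamma> = y \<and> pathfinish \<gamma> = z}"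
  let ?height = "\<lambda>\<gamma>. SUP t\<in>{0..1}. V (\<gamma> t)"
  have height_ge: "V z \<le> ?height p" if "p \<in> ?P" for p
  proof -
    have "compact ((V \<circ> p) ` {0..1})"
      using that by (intro compact_continuous_image continuous_on_compose)
        (auto simp: path_def intro: continuous_on_subset[OF cont])
    hence "bdd_above ((\<lambda>t. V (p t)) ` {0..1})"
      by (auto dest!: compact_imp_bounded bounded_imp_bdd_above simp: o_def)
    hence "V (p 1) \<le> ?height p" by (intro cSUP_upper) auto
    thus ?thesis using that by (simp add: pathfinish_def)
  qed
  have "V z \<le> Inf (?height ` ?P)"
    using \<gamma> height_ge by (intro cINF_greatest) auto
  moreover have "Inf (?height ` ?P) \<le> ?height \<gamma>"
    using \<gamma> height_ge by (intro cINF_lower) (auto simp: bdd_below_def)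
  moreover have "?height \<gamma> \<le> V z"
    using below by (intro cSUP_least) (auto simp: path_image_def)
  ultimately show ?thesis unfolding comm_height_def by linarith
qed

lemma closed_segment_subset_open_valley:
  fixes V :: "'a::euclidean_space \<Rightarrow> real"
  assumes cont: "continuous_on UNIV V"
    and descent_y: "\<And>x. x \<in> closed_segment y w \<Longrightarrow> V x \<le> V y"
    and descent_z: "\<And>x. x \<in> closed_segment z w \<Longrightarrow> V x \<le> V z"
    and "V y < V z"
  shows "closed_segment y w \<subseteq> open_valley V z"
proof
  fix x assume x: "x \<in> closed_segment y w"
  have sub: "closed_segment x w \<subseteq> closed_segment y w"
    using x by (simp add: subset_closed_segment)
  have "V u \<le> V z" if "u \<in> closed_segment x w \<union> closed_segment w z" for u
  proof -
    have "u \<in> closed_segment y w \<or> u \<in> closed_segment z w"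
      using that sub closed_segment_commute[of w z] by blast
    thus ?thesis using descent_y descent_z \<open>V y < V z\<close> by (meson less_imp_le order.trans)
  qed
  hence "comm_height V x z = V z"
    by (intro comm_height_eq_of_path_below[OF cont, of "linepath x w +++ linepath w z"])
      (auto simp: path_image_join)
  moreover have "V x < V z" using descent_y[OF x] \<open>V y < V z\<close> by simp
  ultimately show "x \<in> open_valley V z"
    by (simp add: open_valley_def closed_valley_def)
qed

lemma gradient_inner: "blinfun_apply D v = gradient D \<bullet> v"
proof -
  have "blinfun_apply D v = blinfun_apply D (\<Sum>b\<in>Basis. (v \<bullet> b) *\<^sub>R b)"
    by (simp add: euclidean_representation)
  also have "\<dots> = (\<Sum>b\<in>Basis. (v \<bullet> b) * blinfun_apply D b)"
    by (simp add: blinfun.sum_right blinfun.scaleR_right)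
  also have "\<dots> = gradient D \<bullet> v"
    by (simp add: gradient_def inner_sum_left inner_sum_right inner_commute mult.commute)
  finally show ?thesis .
qed

lemma nonincreasing_on_closed_segment:
  fixes V :: "'a::real_normed_vector \<Rightarrow> real"
  assumes deriv: "\<And>x. x \<in> closed_segment y w \<Longrightarrow> (V has_derivative blinfun_apply (V' x)) (at x)"
    and nonpos: "\<And>x. x \<in> closed_segment y w \<Longrightarrow> blinfun_apply (V' x) (w - y) \<le> 0"
    and x: "x \<in> closed_segment y w"
  shows "V x \<le> V y"
proof -
  define p where "p s = y + s *\<^sub>R (w - y)" for s
  obtain t where t: "0 \<le> t" "t \<le> 1" and x_eq: "x = p t"
  proof -
    obtain t where "0 \<le> t" "t \<le> 1" "x = (1 - t) *\<^sub>R y + t *\<^sub>R w"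
      using x by (auto simp: in_segment)
    moreover have "(1 - t) *\<^sub>R y + t *\<^sub>R w = p t" by (simp add: p_def algebra_simps)
    ultimately show ?thesis using that by simp
  qed
  have p_in: "p s \<in> closed_segment y w" if "0 \<le> s" "s \<le> t" for s
  proof -
    have "p s = (1 - s) *\<^sub>R y + s *\<^sub>R w" by (simp add: p_def algebra_simps)
    thus ?thesis using that t unfolding in_segment by auto
  qed
  have D: "((\<lambda>s. V (p s)) has_derivative (\<lambda>h. blinfun_apply (V' (p s)) (h *\<^sub>R (w - y))))
      (at s within {0..t})" if "0 \<le> s" "s \<le> t" for s
  proof (rule has_derivative_at_withinI)
    have "(p has_derivative (\<lambda>h. h *\<^sub>R (w - y))) (at s)"
      unfolding p_def by (auto intro!: derivative_eq_intros)
    thus "((\<lambda>s. V (p s)) has_derivative (\<lambda>h. blinfun_apply (V' (p s)) (h *\<^sub>R (w - y)))) (at s)"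
      using has_derivative_compose deriv[OF p_in[OF that]] by blast
  qed
  obtain \<xi> where \<xi>: "\<xi> \<in> {0..t}"
    and mvt: "V (p t) - V (p 0) = blinfun_apply (V' (p \<xi>)) ((t - 0) *\<^sub>R (w - y))"
    using mvt_very_simple[OF t(1) D] by blast
  have "blinfun_apply (V' (p \<xi>)) ((t - 0) *\<^sub>R (w - y)) \<le> 0"
    using nonpos[OF p_in] \<xi> t by (simp add: blinfun.scaleR_right mult_nonneg_nonpos)
  thus ?thesis using mvt by (simp add: x_eq p_def)
qed

lemma blinfun_apply_descent_direction_neg:
  fixes D D0 :: "'a::euclidean_space \<Rightarrow>\<^sub>L real"
  assumes \<rho>: "\<rho> > 0" and g: "gradient D0 \<noteq> 0"
    and D: "norm (D - D0) < norm (gradient D0) / 4"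
    and y: "norm (y - z) \<le> \<rho> * norm (gradient D0) / 4"
  shows "blinfun_apply D (z - \<rho> *\<^sub>R gradient D0 - y) < 0"
proof -
  define g where "g = gradient D0"
  define n where "n = norm g"
  define v where "v = z - \<rho> *\<^sub>R g - y"
  have n: "n > 0" using g by (simp add: n_def g_def)
  have "norm v \<le> norm (\<rho> *\<^sub>R g) + norm (z - y)"
    unfolding v_def by (metis diff_diff_eq2 norm_minus_commute norm_triangle_ineq4 add.commute)
  hence v_bound: "norm v \<le> \<rho> * n + \<rho> * n / 4"
    using y \<rho> by (simp add: n_def g_def norm_minus_commute)
  have "blinfun_apply D v = g \<bullet> v + blinfun_apply (D - D0) v"
    by (simp add: blinfun.diff_left gradient_inner[of D0] g_def)
  also have "g \<bullet> v = - \<rho> * n\<^sup>2 + g \<bullet> (z - y)"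
    by (simp add: v_def inner_diff_right n_def power2_norm_eq_inner)
  also have "g \<bullet> (z - y) \<le> n * (\<rho> * n / 4)"
  proof -
    have "g \<bullet> (z - y) \<le> n * norm (z - y)" unfolding n_def by (rule norm_cauchy_schwarz)
    also have "\<dots> \<le> n * (\<rho> * n / 4)"
      using y n by (intro mult_left_mono) (auto simp: n_def g_def norm_minus_commute)
    finally show ?thesis .
  qed
  also have "blinfun_apply (D - D0) v \<le> norm (D - D0) * norm v"
    by (metis abs_le_D1 norm_blinfun real_norm_def)
  also have "\<dots> \<le> (n / 4) * (\<rho> * n + \<rho> * n / 4)"
    using D v_bound n by (intro mult_mono) (auto simp: n_def g_def)
  finally have "blinfun_apply D v \<le> - (7/16) * \<rho> * n\<^sup>2"
    by (simp add: algebra_simps power2_eq_square)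
  also have "\<dots> < 0" using \<rho> n by simp
  finally show ?thesis by (simp add: v_def g_def)
qed

lemma descent_target_near_noncritical_point:
  fixes V :: "'a::euclidean_space \<Rightarrow> real"
  assumes deriv: "\<And>x. (V has_derivative blinfun_apply (V' x)) (at x)"
    and cont: "isCont V' z" and g: "gradient (V' z) \<noteq> 0" and \<epsilon>: "\<epsilon> > 0"
  obtains w \<delta> where "\<delta> > 0"
    and "\<And>y. dist y z < \<delta> \<Longrightarrow> closed_segment y w \<subseteq> ball z \<epsilon>"
    and "\<And>y x. dist y z < \<delta> \<Longrightarrow> x \<in> closed_segment y w \<Longrightarrow> V x \<le> V y"
proof -
  define n where "n = norm (gradient (V' z))"
  have n: "n > 0" using g by (simp add: n_def)
  obtain r where r: "r > 0" and near: "\<And>x. dist x z < r \<Longrightarrow> norm (V' x - V' z) < n / 4"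
    using cont n unfolding continuous_at_eps_delta dist_norm
    by (metis divide_pos_pos zero_less_numeral)
  define \<rho> where "\<rho> = min r \<epsilon> / (2 * n)"
  have \<rho>: "\<rho> > 0" using r \<epsilon> n by (simp add: \<rho>_def)
  have \<rho>n: "\<rho> * n = min r \<epsilon> / 2" using n by (simp add: \<rho>_def)
  define w where "w = z - \<rho> *\<^sub>R gradient (V' z)"
  define \<delta> where "\<delta> = \<rho> * n / 4"
  have segment_near: "closed_segment y w \<subseteq> cball z (\<rho> * n)" if "dist y z < \<delta>" for y
    using that mult_pos_pos[OF \<rho> n, unfolded n_def] by (intro closed_segment_subset)
      (auto simp: w_def \<delta>_def dist_norm n_def norm_minus_commute)
  show ?thesis
  proof
    show "\<delta> > 0" using \<rho> n by (simp add: \<delta>_def)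
    show "closed_segment y w \<subseteq> ball z \<epsilon>" if "dist y z < \<delta>" for y
      using segment_near[OF that] \<rho>n r \<epsilon> by (auto simp: dist_commute)
    show "V x \<le> V y" if y: "dist y z < \<delta>" and x: "x \<in> closed_segment y w" for x y
    proof (rule nonincreasing_on_closed_segment[OF deriv _ x])
      fix u assume "u \<in> closed_segment y w"
      hence "dist u z < r" using segment_near[OF y] \<rho>n r \<epsilon> by (auto simp: dist_commute)
      thus "blinfun_apply (V' u) (w - y) \<le> 0"
        using blinfun_apply_descent_direction_neg[OF \<rho> g, of "V' u" y z] near y
        by (simp add: w_def \<delta>_def n_def dist_norm)
    qed
  qed
qed

text \<open>A path in \<open>insert z U\<close> from a far point of \<open>U\<close> to \<open>z\<close>, stopped on the sphere of
  radius \<open>\<delta>/2\<close> around \<open>z\<close>, has not yet left \<open>U\<close>.\<close>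
lemma path_connected_if_connected_near_removed_point:
  fixes U :: "'a::real_normed_vector set"
  assumes pc: "path_connected (insert z U)" and z: "z \<notin> U" and \<delta>: "\<delta> > 0"
    and near: "\<And>y. y \<in> U \<Longrightarrow> dist y z < \<delta> \<Longrightarrow> path_component U y w"
  shows "path_connected U"
proof -
  have to_w: "path_component U a w" if a: "a \<in> U" for a
  proof (cases "dist a z < \<delta> / 2")
    case True
    thus ?thesis using \<delta> by (intro near[OF a]) simp
  next
    case False
    define S where "S = - ball z (\<delta> / 2)"
    obtain \<gamma> where \<gamma>: "path \<gamma>" "path_image \<gamma> \<subseteq> insert z U" "pathstart \<gamma> = a" "pathfinish \<gamma> = z"
      using pc a unfolding path_connected_def by blast
    have "closed S" "a \<in> S" "z \<notin> S"
      using False \<delta> by (auto simp: S_def dist_commute)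
    then obtain h where h: "path h" "pathstart h = a" "path_image h \<subseteq> path_image \<gamma> \<inter> S"
      "pathfinish h \<in> frontier S"
      using exists_path_subpath_to_frontier_closed[of S \<gamma>] \<gamma> by metis
    have h_in_U: "path_image h \<subseteq> U"
      using h(3) \<gamma>(2) \<open>z \<notin> S\<close> by blast
    have "path_component U a (pathfinish h)"
      using h h_in_U unfolding path_component_def by blast
    moreover have "dist (pathfinish h) z < \<delta>"
      using h(4) \<delta> by (simp add: S_def dist_commute)
    hence "path_component U (pathfinish h) w"
      using h_in_U by (intro near) auto
    ultimately show ?thesis by (rule path_component_trans)
  qed
  show ?thesis unfolding path_connected_component
    using to_w by (meson path_component_sym path_component_trans)
qed

theorem proposition2p5:
  fixes V :: "'a::euclidean_space \<Rightarrow> real"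
    and V' :: "'a \<Rightarrow> ('a \<Rightarrow>\<^sub>L real)"
    and z :: 'a
  assumes cont: "continuous_on UNIV V"
    and bdd_below: "bdd_below (range V)"
    and tight: "\<And>c. compact {x. V x \<le> c}"
    and deriv: "\<And>x. (V has_derivative blinfun_apply (V' x)) (at x)"
    and C1: "continuous_on UNIV V'"
    and saddle: "is_saddle V z"
  shows "gradient (V' z) = 0"
proof (rule ccontr)
  assume g: "gradient (V' z) \<noteq> 0"
  obtain \<eta> where \<eta>: "\<eta> > 0"
    and not_pc: "\<not> path_connected (open_valley V z \<inter> ball z \<eta>)"
    and pc: "path_connected ((open_valley V z \<union> {z}) \<inter> ball z \<eta>)"
    using saddle unfolding is_saddle_def by blast
  define U where "U = open_valley V z \<inter> ball z \<eta>"
  have "isCont V' z" using C1 by (simp add: continuous_on_eq_continuous_at)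
  then obtain w \<delta> where \<delta>: "\<delta> > 0"
    and in_ball: "\<And>y. dist y z < \<delta> \<Longrightarrow> closed_segment y w \<subseteq> ball z \<eta>"
    and descent: "\<And>y x. dist y z < \<delta> \<Longrightarrow> x \<in> closed_segment y w \<Longrightarrow> V x \<le> V y"
    by (rule descent_target_near_noncritical_point[OF deriv _ g \<eta>]) (rule that)
  have near_joins_w: "path_component U y w" if y: "y \<in> U" "dist y z < \<delta>" for y
  proof (rule path_component_linepath)
    have "V y < V z" using y by (simp add: U_def open_valley_def)
    moreover have "V x \<le> V z" if "x \<in> closed_segment z w" for x
      using descent[OF _ that] \<delta> by simp
    ultimately have "closed_segment y w \<subseteq> open_valley V z"
      using descent[OF y(2)] by (intro closed_segment_subset_open_valley[OF cont])
    thus "closed_segment y w \<subseteq> U" using in_ball[OF y(2)] unfolding U_def by blast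
  qed
  have "insert z U = (open_valley V z \<union> {z}) \<inter> ball z \<eta>"
    using \<eta> by (auto simp: U_def)
  with pc have insert_pc: "path_connected (insert z U)" by simp
  have "z \<notin> U" by (simp add: U_def open_valley_def)
  hence "path_connected U"
    using path_connected_if_connected_near_removed_point[OF insert_pc _ \<delta> near_joins_w] by blast
  thus False using not_pc by (simp add: U_def)
qed

end
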